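(* Let $G$ be a maximal twelve tone subgroup of $S_{11}$ of signature $(n_1,\dots,n_d)$ with or without crossings, acting on $\mathcal{T}_7$. Then the multiset of sizes of the $G$-orbits of $\mathcal{T}_7$ is the multiset $$\left\{\binom{n_1}{k_1}\binom{n_2}{k_2}\cdots\binom{n_d}{k_d} : k_1,\dots,k_d\in\mathbb{Z}_{\ge 0},\ k_1+\cdots+k_d=6,\ k_i\le n_i \text{ for all } i\right\}$$ (one orbit for each such tuple $(k_1,\dots,k_d)$). Consequently, for all real $t\neq 0$, $$\mathrm{orb}_t(G,\mathcal{T}_7)=\left(\frac{1}{462}\sum \left(\binom{n_1}{k_1}\cdots\binom{n_d}{k_d}\right)^{t+1}\right)^{1/t},$$ the maximal $G$-orbits of $\mathcal{T}_7$ have size $\mathrm{orb}_\infty(G,\mathcal{T}_7)=\max \binom{n_1}{k_1}\cdots\binom{n_d}{k_d}$, and $\mathrm{diam}_t(G,\mathcal{T}_7)=\mathrm{orb}_\infty(G,\mathcal{T}_7)/\mathrm{orb}_t(G,\mathcal{T}_7)$; moreover $462=\binom{11}{6}=\sum \binom{n_1}{k_1}\cdots\binom{n_d}{k_d}$, and the number of $G$-orbits of $\mathcal{T}_7$ equals the number of such tuples $(k_1,\dots,k_d)$. Here all sums and the maximum range over tuples $(k_1,\dots,k_d)$ of nonnegative integers with $k_1+\cdots+k_d=6$ and $k_i\le n_i$ for all $i$.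
   Context: Let $\mathbb{Z}_{12}=\{0,\dots,11\}$ and let $\mathcal{T}_7$ be the set of $7$-element subsets of $\mathbb{Z}_{12}$ containing $0$ ($|\mathcal{T}_7|=462$). $S_{11}$ is the group of permutations of $\{1,\dots,11\}$, extended by $\sigma(0)=0$, acting on $\mathcal{T}_7$ by $\sigma\cdot s=\{\sigma(x):x\in s\}$. For positive integers $n_1+\cdots+n_d=11$, $S_{n_1,\dots,n_d}$ denotes the image of $S_{n_1}\times\cdots\times S_{n_d}\to S_{11}$ where the $i$-th factor permutes the consecutive block $\{n_1+\cdots+n_{i-1}+1,\dots,n_1+\cdots+n_i\}$; a maximal twelve tone group of signature $(n_1,\dots,n_d)$ with or without crossings is any conjugate $\tau S_{n_1,\dots,n_d}\tau^{-1}$, $\tau\in S_{11}$. For a group acting on a finite set $S$: $\mathrm{orb}_t(G,S)=\left(\frac{1}{|S|}\sum_{s\in S}|Gs|^t\right)^{1/t}$ for real $t\ne0$, $\mathrm{orb}_\infty(G,S)=\max_s|Gs|$, and $\mathrm{diam}_t(G,S)=\mathrm{orb}_\infty(G,S)/\mathrm{orb}_t(G,S)$. *)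

theory Defs
  imports Complex_Main "HOL-Library.Multiset" "HOL-Combinatorics.Permutations"
begin

text \<open>Z_12 is modelled as the naturals 0..11. Permutations of {1..11}, extended by
  sigma(0) = 0, are functions nat => nat permuting {1..11} (identity elsewhere).\<close>

definition T7 :: "nat set set" where
  "T7 = {s. s \<subseteq> {0..<12} \<and> 0 \<in> s \<and> card s = 7}"

definition S11 :: "(nat \<Rightarrow> nat) set" where
  "S11 = {\<sigma>. \<sigma> permutes {1..11}}"

definition block :: "nat list \<Rightarrow> nat \<Rightarrow> nat set" where
  "block ns i = {sum_list (take i ns) + 1 .. sum_list (take i ns) + ns ! i}"

text \<open>Image of S_{n_1} x ... x S_{n_d} in S_11.\<close>
definition young :: "nat list \<Rightarrow> (nat \<Rightarrow> nat) set" where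
  "young ns = {\<sigma> \<in> S11. \<forall>i < length ns. \<sigma> ` block ns i = block ns i}"

definition conj_grp :: "(nat \<Rightarrow> nat) \<Rightarrow> (nat \<Rightarrow> nat) set \<Rightarrow> (nat \<Rightarrow> nat) set" where
  "conj_grp \<tau> H = {\<tau> \<circ> \<sigma> \<circ> inv \<tau> | \<sigma>. \<sigma> \<in> H}"

definition max_tt_group :: "nat list \<Rightarrow> (nat \<Rightarrow> nat) set \<Rightarrow> bool" where
  "max_tt_group ns G \<longleftrightarrow> (\<exists>\<tau> \<in> S11. G = conj_grp \<tau> (young ns))"

definition set_act :: "(nat \<Rightarrow> nat) \<Rightarrow> nat set \<Rightarrow> nat set" where
  "set_act \<sigma> s = \<sigma> ` s"

definition orbit :: "('g \<Rightarrow> 'x \<Rightarrow> 'x) \<Rightarrow> 'g set \<Rightarrow> 'x \<Rightarrow> 'x set" where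
  "orbit act G x = (\<lambda>g. act g x) ` G"

definition orbits :: "('g \<Rightarrow> 'x \<Rightarrow> 'x) \<Rightarrow> 'g set \<Rightarrow> 'x set \<Rightarrow> 'x set set" where
  "orbits act G S = orbit act G ` S"

definition orb_t :: "('g \<Rightarrow> 'x \<Rightarrow> 'x) \<Rightarrow> 'g set \<Rightarrow> 'x set \<Rightarrow> real \<Rightarrow> real" where
  "orb_t act G S t =
     ((1 / real (card S)) * (\<Sum>s\<in>S. real (card (orbit act G s)) powr t)) powr (1 / t)"

definition orb_inf :: "('g \<Rightarrow> 'x \<Rightarrow> 'x) \<Rightarrow> 'g set \<Rightarrow> 'x set \<Rightarrow> nat" where
  "orb_inf act G S = Max ((\<lambda>s. card (orbit act G s)) ` S)"

definition diam_t :: "('g \<Rightarrow> 'x \<Rightarrow> 'x) \<Rightarrow> 'g set \<Rightarrow> 'x set \<Rightarrow> real \<Rightarrow> real" where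
  "diam_t act G S t = real (orb_inf act G S) / orb_t act G S t"

definition tuples :: "nat list \<Rightarrow> nat list set" where
  "tuples ns = {ks. length ks = length ns \<and> sum_list ks = 6 \<and> (\<forall>i < length ns. ks ! i \<le> ns ! i)}"

definition binprod :: "nat list \<Rightarrow> nat list \<Rightarrow> nat" where
  "binprod ns ks = (\<Prod>i<length ns. ns ! i choose ks ! i)"

end

theory Submission
  imports Defs
begin

text \<open>G = tau S_{n_1,...,n_d} tau^-1 is the group of permutations of {1..11} (fixing 0)
  that preserve every block B_i = tau(i-th consecutive block), where |B_i| = n_i. Two sets in
  T_7 lie in the same G-orbit iff they meet every block in the same number of points: such
  permutations preserve these numbers, and conversely sets of equal size inside one block can
  be matched by a permutation of that block, and these blockwise permutations glue together.
  Hence the orbits are indexed by the profiles (k_1, ..., k_d) with k_i \<le> n_i and sum 6, and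
  the orbit with profile k is obtained by choosing k_i points in each block, so it has
  \<Prod> (n_i choose k_i) elements. Every other claim is a sum or maximum over this
  description; counting T_7 orbit by orbit gives (11 choose 6) = \<Sum> \<Prod> (n_i choose k_i).\<close>

lemma obtain_permutes_image_eq:
  assumes "finite S" "A \<subseteq> S" "C \<subseteq> S" "card A = card C"
  obtains p where "p permutes S" "p ` A = C"
proof -
  obtain f where f: "bij_betw f A C"
    using assms by (metis finite_same_card_bij finite_subset)
  have "card (S - A) = card (S - C)"
    using assms by (simp add: card_Diff_subset finite_subset)
  then obtain g where g: "bij_betw g (S - A) (S - C)"
    using assms(1) by (metis finite_Diff finite_same_card_bij)
  define h where "h x = (if x \<in> A then f x else g x)" for x
  have "bij_betw h (A \<union> (S - A)) (C \<union> (S - C))"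
    unfolding h_def by (rule bij_betw_disjoint_Un[OF f g]) auto
  then have "bij_betw h S S"
    using assms(2,3) by (simp add: Un_absorb1 Un_Diff_cancel)
  then have "restrict_id h S permutes S"
    by (rule permutes_restrict_id)
  moreover have "restrict_id h S ` A = C"
    using f assms(2) by (auto simp: restrict_id_def h_def bij_betw_def)
  ultimately show ?thesis by (rule that)
qed

lemma permutes_UNION_disjoint:
  assumes disj: "disjoint_family_on B I" and perm: "\<And>i. i \<in> I \<Longrightarrow> p i permutes B i"
  obtains \<sigma> where "\<sigma> permutes (\<Union>i\<in>I. B i)" and "\<And>i x. i \<in> I \<Longrightarrow> x \<in> B i \<Longrightarrow> \<sigma> x = p i x"
proof -
  define \<sigma> where "\<sigma> x = (if \<exists>i\<in>I. x \<in> B i then p (SOME i. i \<in> I \<and> x \<in> B i) x else x)" for x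
  have \<sigma>_eq: "\<sigma> x = p i x" if "i \<in> I" "x \<in> B i" for i x
  proof -
    have "(SOME i. i \<in> I \<and> x \<in> B i) = i"
      using that disj by (intro some_equality) (auto simp: disjoint_family_on_def)
    then show ?thesis using that by (auto simp: \<sigma>_def)
  qed
  have "bij_betw \<sigma> (B i) (B i)" if "i \<in> I" for i
    using permutes_imp_bij[OF perm[OF that]] by (rule bij_betw_cong[THEN iffD2, rotated]) (simp add: \<sigma>_eq that)
  then have "bij_betw \<sigma> (\<Union>i\<in>I. B i) (\<Union>i\<in>I. B i)"
    by (rule bij_betw_UNION_disjoint[OF disj])
  then have "\<sigma> permutes (\<Union>i\<in>I. B i)"
    by (rule bij_imp_permutes) (auto simp: \<sigma>_def)
  then show ?thesis using \<sigma>_eq that by blast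
qed

lemma conj_grp_set_stabilizer:
  assumes \<tau>: "\<tau> permutes \<Omega>"
  shows "conj_grp \<tau> {\<sigma>. \<sigma> permutes \<Omega> \<and> (\<forall>i<d. \<sigma> ` A i = A i)}
       = {\<sigma>. \<sigma> permutes \<Omega> \<and> (\<forall>i<d. \<sigma> ` \<tau> ` A i = \<tau> ` A i)}"
proof -
  have inv_\<tau>: "inv \<tau> \<circ> \<tau> = id" "\<tau> \<circ> inv \<tau> = id"
    using permutes_inv_o[OF \<tau>] by auto
  have conj_image: "(\<tau> \<circ> \<sigma> \<circ> inv \<tau>) ` \<tau> ` X = \<tau> ` \<sigma> ` X" for \<sigma> X
    by (simp only: image_comp[symmetric] image_inv_f_f[OF permutes_inj[OF \<tau>]])
  show ?thesis
  proof (intro set_eqI iffI)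
    fix \<rho> assume "\<rho> \<in> conj_grp \<tau> {\<sigma>. \<sigma> permutes \<Omega> \<and> (\<forall>i<d. \<sigma> ` A i = A i)}"
    then obtain \<sigma> where \<rho>: "\<rho> = \<tau> \<circ> \<sigma> \<circ> inv \<tau>"
      and \<sigma>: "\<sigma> permutes \<Omega>" "\<forall>i<d. \<sigma> ` A i = A i"
      by (auto simp: conj_grp_def)
    have "\<tau> \<circ> \<sigma> \<circ> inv \<tau> permutes \<Omega>"
      using \<tau> \<sigma> by (simp add: permutes_compose permutes_inv)
    moreover have "\<forall>i<d. (\<tau> \<circ> \<sigma> \<circ> inv \<tau>) ` \<tau> ` A i = \<tau> ` A i"
      using \<sigma> by (simp only: conj_image) simp
    ultimately show "\<rho> \<in> {\<sigma>. \<sigma> permutes \<Omega> \<and> (\<forall>i<d. \<sigma> ` \<tau> ` A i = \<tau> ` A i)}"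
      unfolding \<rho> by blast
  next
    fix \<rho> assume \<rho>: "\<rho> \<in> {\<sigma>. \<sigma> permutes \<Omega> \<and> (\<forall>i<d. \<sigma> ` \<tau> ` A i = \<tau> ` A i)}"
    define \<sigma> where "\<sigma> = inv \<tau> \<circ> \<rho> \<circ> \<tau>"
    have "\<rho> = \<tau> \<circ> \<sigma> \<circ> inv \<tau>"
      by (simp add: \<sigma>_def comp_assoc inv_\<tau>) (simp flip: comp_assoc add: inv_\<tau>)
    moreover have "\<sigma> permutes \<Omega>"
      using \<rho> \<tau> by (simp add: \<sigma>_def permutes_compose permutes_inv)
    moreover have "\<forall>i<d. \<sigma> ` A i = A i"
      using \<rho> by (simp only: \<sigma>_def image_comp[symmetric]) (simp add: image_inv_f_f permutes_inj[OF \<tau>])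
    ultimately show "\<rho> \<in> conj_grp \<tau> {\<sigma>. \<sigma> permutes \<Omega> \<and> (\<forall>i<d. \<sigma> ` A i = A i)}"
      by (auto simp: conj_grp_def)
  qed
qed

definition extensions :: "'a set \<Rightarrow> 'a set \<Rightarrow> nat \<Rightarrow> 'a set set" where
  "extensions \<Omega> C k = {Y. Y - \<Omega> = C \<and> card (Y \<inter> \<Omega>) = k}"

lemma extensions_eq_image:
  assumes "C \<inter> \<Omega> = {}"
  shows "extensions \<Omega> C k = (\<lambda>X. C \<union> X) ` {X. X \<subseteq> \<Omega> \<and> card X = k}"
proof (intro set_eqI iffI)
  fix Y assume "Y \<in> extensions \<Omega> C k"
  then have "Y = C \<union> (Y \<inter> \<Omega>)" "card (Y \<inter> \<Omega>) = k"
    by (auto simp: extensions_def)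
  then show "Y \<in> (\<lambda>X. C \<union> X) ` {X. X \<subseteq> \<Omega> \<and> card X = k}" by blast
next
  fix Y assume "Y \<in> (\<lambda>X. C \<union> X) ` {X. X \<subseteq> \<Omega> \<and> card X = k}"
  then obtain X where "Y = C \<union> X" "X \<subseteq> \<Omega>" "card X = k" by blast
  moreover have "(C \<union> X) \<inter> \<Omega> = X" "C \<union> X - \<Omega> = C"
    using assms \<open>X \<subseteq> \<Omega>\<close> by auto
  ultimately show "Y \<in> extensions \<Omega> C k" by (simp add: extensions_def)
qed

lemma card_extensions:
  assumes "finite \<Omega>" "C \<inter> \<Omega> = {}"
  shows "card (extensions \<Omega> C k) = card \<Omega> choose k"
proof -
  have "inj_on (\<lambda>X. C \<union> X) {X. X \<subseteq> \<Omega> \<and> card X = k}"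
    using assms(2) by (intro inj_onI) blast
  then show ?thesis
    using assms by (simp add: extensions_eq_image card_image n_subsets)
qed

lemma finite_extensions:
  assumes "finite \<Omega>"
  shows "finite (extensions \<Omega> C k)"
proof -
  have "Y = C \<union> (Y \<inter> \<Omega>)" if "Y \<in> extensions \<Omega> C k" for Y
    using that by (auto simp: extensions_def)
  then have "extensions \<Omega> C k \<subseteq> (\<lambda>X. C \<union> X) ` Pow \<Omega>"
    by blast
  then show ?thesis
    using assms finite_subset by blast
qed

locale block_partition =
  fixes \<Omega> :: "'a set" and d :: nat and B :: "nat \<Rightarrow> 'a set"
  assumes finite_\<Omega>: "finite \<Omega>"
    and disjoint_blocks: "disjoint_family_on B {..<d}"
    and UN_blocks: "(\<Union>i<d. B i) = \<Omega>"
begin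

definition block_stabilizer :: "('a \<Rightarrow> 'a) set" where
  "block_stabilizer = {\<sigma>. \<sigma> permutes \<Omega> \<and> (\<forall>i<d. \<sigma> ` B i = B i)}"

definition profile :: "'a set \<Rightarrow> nat list" where
  "profile X = map (\<lambda>i. card (X \<inter> B i)) [0..<d]"

definition profile_class :: "'a set \<Rightarrow> nat list \<Rightarrow> 'a set set" where
  "profile_class C ks = {Y. Y - \<Omega> = C \<and> profile Y = ks}"

definition admissible_profiles :: "nat \<Rightarrow> nat list set" where
  "admissible_profiles k = {ks. length ks = d \<and> sum_list ks = k \<and> (\<forall>i<d. ks ! i \<le> card (B i))}"

definition class_size :: "nat list \<Rightarrow> nat" where
  "class_size ks = (\<Prod>i<d. card (B i) choose ks ! i)"

lemma block_subset: "i < d \<Longrightarrow> B i \<subseteq> \<Omega>"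
  using UN_blocks by blast

lemma finite_block: "i < d \<Longrightarrow> finite (B i)"
  using block_subset finite_\<Omega> finite_subset by blast

lemma Diff_Un_Int_blocks: "X = (X - \<Omega>) \<union> (\<Union>i<d. X \<inter> B i)"
  using UN_blocks by blast

lemma length_profile [simp]: "length (profile X) = d"
  by (simp add: profile_def)

lemma profile_eq_conv:
  "profile Y = ks \<longleftrightarrow> length ks = d \<and> (\<forall>i<d. card (Y \<inter> B i) = ks ! i)"
  by (auto simp: profile_def list_eq_iff_nth_eq)

lemma nth_profile [simp]: "i < d \<Longrightarrow> profile X ! i = card (X \<inter> B i)"
  by (simp add: profile_def)

lemma sum_list_profile: "sum_list (profile X) = card (X \<inter> \<Omega>)"
proof -
  have "sum_list (profile X) = (\<Sum>i<d. card (X \<inter> B i))"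
    by (simp add: profile_def atLeast0LessThan flip: sum_set_upt_conv_sum_list_nat)
  also have "\<dots> = card (\<Union>i<d. X \<inter> B i)"
    using disjoint_blocks finite_block
    by (intro card_UN_disjoint' [symmetric]) (auto simp: disjoint_family_on_def)
  also have "(\<Union>i<d. X \<inter> B i) = X \<inter> \<Omega>"
    using UN_blocks by blast
  finally show ?thesis .
qed

lemma stabilizer_image_eq_iff:
  "(\<exists>\<sigma>\<in>block_stabilizer. \<sigma> ` X = Y) \<longleftrightarrow> Y - \<Omega> = X - \<Omega> \<and> profile Y = profile X"
proof
  assume "\<exists>\<sigma>\<in>block_stabilizer. \<sigma> ` X = Y"
  then obtain \<sigma> where Y: "Y = \<sigma> ` X" and \<sigma>: "\<sigma> permutes \<Omega>" "\<forall>i<d. \<sigma> ` B i = B i"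
    by (auto simp: block_stabilizer_def)
  have inj: "inj \<sigma>"
    using \<sigma>(1) by (rule permutes_inj)
  have "\<sigma> ` X - \<Omega> = \<sigma> ` (X - \<Omega>)"
    using \<sigma>(1) by (simp add: image_set_diff[OF inj] permutes_image)
  also have "\<dots> = X - \<Omega>"
    using \<sigma>(1) by (auto simp: permutes_not_in)
  finally have "Y - \<Omega> = X - \<Omega>"
    using Y by simp
  moreover have "card (Y \<inter> B i) = card (X \<inter> B i)" if "i < d" for i
  proof -
    have "Y \<inter> B i = \<sigma> ` (X \<inter> B i)"
      using \<sigma>(2) that by (simp add: Y image_Int[OF inj])
    then show ?thesis
      using inj by (simp add: card_image inj_on_subset)
  qed
  ultimately show "Y - \<Omega> = X - \<Omega> \<and> profile Y = profile X"
    by (simp add: profile_eq_conv)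
next
  assume "Y - \<Omega> = X - \<Omega> \<and> profile Y = profile X"
  then have outside: "Y - \<Omega> = X - \<Omega>" and cards: "\<And>i. i < d \<Longrightarrow> card (X \<inter> B i) = card (Y \<inter> B i)"
    by (auto simp: profile_eq_conv)
  have "\<forall>i\<in>{..<d}. \<exists>p. p permutes B i \<and> p ` (X \<inter> B i) = Y \<inter> B i"
    using obtain_permutes_image_eq[OF finite_block _ _ cards] by blast
  then obtain p where p: "\<And>i. i < d \<Longrightarrow> p i permutes B i \<and> p i ` (X \<inter> B i) = Y \<inter> B i"
    by (metis lessThan_iff)
  obtain \<sigma> where \<sigma>: "\<sigma> permutes \<Omega>" and \<sigma>_eq: "\<And>i x. i < d \<Longrightarrow> x \<in> B i \<Longrightarrow> \<sigma> x = p i x"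
    using permutes_UNION_disjoint[OF disjoint_blocks, of p] p UN_blocks by auto
  have \<sigma>_on_block: "\<sigma> ` Z = p i ` Z" if "i < d" "Z \<subseteq> B i" for i Z
    using \<sigma>_eq that by (intro image_cong) auto
  have "\<sigma> \<in> block_stabilizer"
    using \<sigma> p by (simp add: block_stabilizer_def \<sigma>_on_block permutes_image)
  moreover have "\<sigma> ` X = Y"
  proof -
    have "\<sigma> ` X = \<sigma> ` (X - \<Omega>) \<union> (\<Union>i<d. \<sigma> ` (X \<inter> B i))"
      using arg_cong[OF Diff_Un_Int_blocks[of X], of "image \<sigma>"] by (simp only: image_Un image_UN)
    also have "\<dots> = (Y - \<Omega>) \<union> (\<Union>i<d. Y \<inter> B i)"
      using \<sigma> p outside by (auto simp: \<sigma>_on_block permutes_not_in)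
    also have "\<dots> = Y"
      by (rule Diff_Un_Int_blocks [symmetric])
    finally show ?thesis .
  qed
  ultimately show "\<exists>\<sigma>\<in>block_stabilizer. \<sigma> ` X = Y" by blast
qed

lemma Un_UN_Int_block:
  assumes "C \<inter> \<Omega> = {}" "\<And>j. j < d \<Longrightarrow> F j \<subseteq> B j" "i < d"
  shows "(C \<union> (\<Union>j<d. F j)) \<inter> B i = F i"
proof (intro equalityI subsetI)
  fix x assume x: "x \<in> (C \<union> (\<Union>j<d. F j)) \<inter> B i"
  then have "x \<notin> C"
    using assms(1,3) block_subset by blast
  then obtain j where "j < d" "x \<in> F j"
    using x by blast
  moreover have "j = i"
    using disjoint_blocks assms(2,3) x \<open>j < d\<close> \<open>x \<in> F j\<close>
    unfolding disjoint_family_on_def by blast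
  ultimately show "x \<in> F i" by simp
qed (use assms(2,3) in blast)+

lemma card_profile_class:
  assumes C: "C \<inter> \<Omega> = {}" and ks: "length ks = d"
  shows "card (profile_class C ks) = class_size ks"
proof -
  define P where "P = (\<Pi>\<^sub>E i\<in>{..<d}. {Z. Z \<subseteq> B i \<and> card Z = ks ! i})"
  have "bij_betw (\<lambda>Y. \<lambda>i\<in>{..<d}. Y \<inter> B i) (profile_class C ks) P"
  proof (rule bij_betw_byWitness[where f' = "\<lambda>F. C \<union> (\<Union>i<d. F i)"])
    show "\<forall>Y\<in>profile_class C ks. C \<union> (\<Union>i<d. (\<lambda>i\<in>{..<d}. Y \<inter> B i) i) = Y"
    proof
      fix Y assume "Y \<in> profile_class C ks"
      then have "C \<union> (\<Union>i<d. (\<lambda>i\<in>{..<d}. Y \<inter> B i) i) = (Y - \<Omega>) \<union> (\<Union>i<d. Y \<inter> B i)"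
        by (simp add: profile_class_def)
      then show "C \<union> (\<Union>i<d. (\<lambda>i\<in>{..<d}. Y \<inter> B i) i) = Y"
        using Diff_Un_Int_blocks[of Y] by (rule trans[OF _ sym])
    qed
    show "\<forall>F\<in>P. (\<lambda>i\<in>{..<d}. (C \<union> (\<Union>j<d. F j)) \<inter> B i) = F"
    proof
      fix F assume F: "F \<in> P"
      then have "F \<in> extensional {..<d}" and "\<And>j. j < d \<Longrightarrow> F j \<subseteq> B j"
        by (auto simp: P_def PiE_def)
      then show "(\<lambda>i\<in>{..<d}. (C \<union> (\<Union>j<d. F j)) \<inter> B i) = F"
        by (auto simp: fun_eq_iff Un_UN_Int_block[OF C] extensional_def)
    qed
    show "(\<lambda>Y. \<lambda>i\<in>{..<d}. Y \<inter> B i) ` profile_class C ks \<subseteq> P"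
    proof (rule image_subsetI)
      fix Y assume "Y \<in> profile_class C ks"
      then have "\<forall>i<d. card (Y \<inter> B i) = ks ! i"
        by (simp add: profile_class_def profile_eq_conv)
      then show "(\<lambda>i\<in>{..<d}. Y \<inter> B i) \<in> P"
        by (simp add: P_def)
    qed
    show "(\<lambda>F. C \<union> (\<Union>i<d. F i)) ` P \<subseteq> profile_class C ks"
    proof safe
      fix F assume F: "F \<in> P"
      then have F_block: "\<And>j. j < d \<Longrightarrow> F j \<subseteq> B j"
        and F_card: "\<And>j. j < d \<Longrightarrow> card (F j) = ks ! j"
        by (auto simp: P_def)
      then have "(\<Union>j<d. F j) \<subseteq> \<Omega>"
        using block_subset by blast
      then have "C \<union> (\<Union>j<d. F j) - \<Omega> = C"
        using C by blast
      moreover have "profile (C \<union> (\<Union>j<d. F j)) = ks"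
        by (simp add: profile_eq_conv Un_UN_Int_block[OF C F_block] F_card ks)
      ultimately show "C \<union> (\<Union>j<d. F j) \<in> profile_class C ks"
        by (simp add: profile_class_def)
    qed
  qed
  then have "card (profile_class C ks) = card P"
    by (rule bij_betw_same_card)
  also have "\<dots> = class_size ks"
    by (simp add: P_def card_PiE n_subsets finite_block class_size_def)
  finally show ?thesis .
qed

lemma orbit_block_stabilizer:
  "orbit image block_stabilizer X = profile_class (X - \<Omega>) (profile X)"
proof (rule set_eqI)
  fix Y show "Y \<in> orbit image block_stabilizer X \<longleftrightarrow> Y \<in> profile_class (X - \<Omega>) (profile X)"
    using stabilizer_image_eq_iff[of X Y] by (auto simp: orbit_def profile_class_def)
qed

lemma class_size_pos: "ks \<in> admissible_profiles k \<Longrightarrow> class_size ks > 0"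
  by (simp add: class_size_def admissible_profiles_def)

lemma finite_admissible_profiles: "finite (admissible_profiles k)"
proof -
  have "admissible_profiles k \<subseteq> {ks. set ks \<subseteq> {..k} \<and> length ks = d}"
    by (auto simp: admissible_profiles_def member_le_sum_list)
  then show ?thesis
    by (rule finite_subset) (simp add: finite_lists_length_eq)
qed

lemma extensions_profile_fibre:
  assumes "ks \<in> admissible_profiles k"
  shows "{Y \<in> extensions \<Omega> C k. profile Y = ks} = profile_class C ks"
  using assms by (auto simp: extensions_def profile_class_def admissible_profiles_def
      simp flip: sum_list_profile)

context
  fixes C :: "'a set"
  assumes C_disjoint: "C \<inter> \<Omega> = {}"
begin

lemma profile_class_nonempty:
  assumes "ks \<in> admissible_profiles k"
  obtains Y where "Y \<in> profile_class C ks"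
proof -
  have "card (profile_class C ks) > 0"
    using assms card_profile_class[OF C_disjoint] class_size_pos
    by (simp add: admissible_profiles_def)
  then have "profile_class C ks \<noteq> {}"
    by auto
  then show ?thesis
    using that by blast
qed

lemma profile_image_extensions: "profile ` extensions \<Omega> C k = admissible_profiles k"
proof (intro equalityI subsetI)
  fix ks assume "ks \<in> profile ` extensions \<Omega> C k"
  then obtain Y where Y: "Y \<in> extensions \<Omega> C k" and ks: "ks = profile Y"
    by blast
  have "card (Y \<inter> B i) \<le> card (B i)" if "i < d" for i
    using finite_block[OF that] by (rule card_mono) auto
  then show "ks \<in> admissible_profiles k"
    using Y by (simp add: ks admissible_profiles_def sum_list_profile extensions_def)
next
  fix ks assume ks: "ks \<in> admissible_profiles k"
  then obtain Y where "Y \<in> profile_class C ks"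
    by (rule profile_class_nonempty)
  then have "Y \<in> extensions \<Omega> C k" "profile Y = ks"
    by (simp_all add: extensions_profile_fibre[OF ks, symmetric])
  then show "ks \<in> profile ` extensions \<Omega> C k"
    by blast
qed

lemma inj_on_profile_class: "inj_on (profile_class C) (admissible_profiles k)"
proof (rule inj_onI)
  fix ks ks' assume ks: "ks \<in> admissible_profiles k" and eq: "profile_class C ks = profile_class C ks'"
  obtain Y where Y: "Y \<in> profile_class C ks"
    using ks by (rule profile_class_nonempty)
  then have "Y \<in> profile_class C ks'"
    using eq by simp
  with Y show "ks = ks'"
    by (simp add: profile_class_def)
qed

lemma orbit_extensions:
  "Y \<in> extensions \<Omega> C k \<Longrightarrow> orbit image block_stabilizer Y = profile_class C (profile Y)"
  by (simp add: orbit_block_stabilizer extensions_def)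

lemma card_orbit_extensions:
  "Y \<in> extensions \<Omega> C k \<Longrightarrow> card (orbit image block_stabilizer Y) = class_size (profile Y)"
  by (simp add: orbit_extensions card_profile_class[OF C_disjoint])

lemma orbits_extensions:
  "orbits image block_stabilizer (extensions \<Omega> C k) = profile_class C ` admissible_profiles k"
proof -
  have "orbits image block_stabilizer (extensions \<Omega> C k) = profile_class C ` profile ` extensions \<Omega> C k"
    unfolding orbits_def image_image by (rule image_cong) (simp_all add: orbit_extensions)
  then show ?thesis
    by (simp add: profile_image_extensions)
qed

lemma sum_extensions_orbit_size:
  fixes h :: "nat \<Rightarrow> 'b::semiring_1"
  shows "(\<Sum>Y\<in>extensions \<Omega> C k. h (card (orbit image block_stabilizer Y)))
       = (\<Sum>ks\<in>admissible_profiles k. of_nat (class_size ks) * h (class_size ks))"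
proof -
  have "(\<Sum>Y\<in>extensions \<Omega> C k. h (card (orbit image block_stabilizer Y)))
      = (\<Sum>Y\<in>extensions \<Omega> C k. h (class_size (profile Y)))"
    by (simp add: card_orbit_extensions)
  also have "\<dots> = (\<Sum>ks\<in>admissible_profiles k. \<Sum>Y\<in>{Y \<in> extensions \<Omega> C k. profile Y = ks}. h (class_size (profile Y)))"
    using finite_extensions[OF finite_\<Omega>] finite_admissible_profiles profile_image_extensions
    by (intro sum.group [symmetric]) auto
  also have "\<dots> = (\<Sum>ks\<in>admissible_profiles k. of_nat (class_size ks) * h (class_size ks))"
  proof (rule sum.cong [OF refl])
    fix ks assume ks: "ks \<in> admissible_profiles k"
    have "(\<Sum>Y\<in>{Y \<in> extensions \<Omega> C k. profile Y = ks}. h (class_size (profile Y)))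
        = (\<Sum>Y\<in>{Y \<in> extensions \<Omega> C k. profile Y = ks}. h (class_size ks))"
      by (rule sum.cong) auto
    also have "\<dots> = of_nat (class_size ks) * h (class_size ks)"
      using ks by (simp add: extensions_profile_fibre card_profile_class[OF C_disjoint] admissible_profiles_def)
    finally show "(\<Sum>Y\<in>{Y \<in> extensions \<Omega> C k. profile Y = ks}. h (class_size (profile Y)))
        = of_nat (class_size ks) * h (class_size ks)" .
  qed
  finally show ?thesis .
qed

lemma mset_orbit_sizes_extensions:
  "image_mset card (mset_set (orbits image block_stabilizer (extensions \<Omega> C k)))
     = image_mset class_size (mset_set (admissible_profiles k))"
proof -
  have "image_mset card (mset_set (orbits image block_stabilizer (extensions \<Omega> C k)))
      = image_mset card (image_mset (profile_class C) (mset_set (admissible_profiles k)))"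
    by (simp add: orbits_extensions image_mset_mset_set[OF inj_on_profile_class])
  also have "\<dots> = image_mset class_size (mset_set (admissible_profiles k))"
    unfolding multiset.map_comp
  proof (rule image_mset_cong)
    fix ks assume "ks \<in># mset_set (admissible_profiles k)"
    then have "length ks = d"
      using finite_admissible_profiles by (simp add: admissible_profiles_def)
    then show "(card \<circ> profile_class C) ks = class_size ks"
      by (simp add: card_profile_class[OF C_disjoint])
  qed
  finally show ?thesis .
qed

lemma card_orbits_extensions:
  "card (orbits image block_stabilizer (extensions \<Omega> C k)) = card (admissible_profiles k)"
  by (simp add: orbits_extensions card_image inj_on_profile_class)

lemma card_extensions_eq_sum_class_size:
  "card (extensions \<Omega> C k) = (\<Sum>ks\<in>admissible_profiles k. class_size ks)"
  using sum_extensions_orbit_size[where h = "\<lambda>_. 1::nat"] by simp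

lemma orb_t_extensions:
  "orb_t image block_stabilizer (extensions \<Omega> C k) t
     = (1 / real (card (extensions \<Omega> C k))
        * (\<Sum>ks\<in>admissible_profiles k. real (class_size ks) powr (t + 1))) powr (1 / t)"
proof -
  have "real n * real n powr t = real n powr (t + 1)" for n :: nat
    by (cases "n = 0") (simp_all add: powr_add)
  then show ?thesis
    using sum_extensions_orbit_size[where h = "\<lambda>n. real n powr t"] by (simp add: orb_t_def)
qed

lemma orb_inf_extensions:
  "orb_inf image block_stabilizer (extensions \<Omega> C k) = Max (class_size ` admissible_profiles k)"
proof -
  have "(\<lambda>Y. card (orbit image block_stabilizer Y)) ` extensions \<Omega> C k
      = class_size ` profile ` extensions \<Omega> C k"
    unfolding image_image by (rule image_cong) (simp_all add: card_orbit_extensions)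
  then show ?thesis
    by (simp add: orb_inf_def profile_image_extensions)
qed

end

end

lemma block_partition_permutes_image:
  assumes "block_partition \<Omega> d B" and \<tau>: "\<tau> permutes \<Omega>"
  shows "block_partition \<Omega> d (\<lambda>i. \<tau> ` B i)"
proof -
  interpret block_partition \<Omega> d B by fact
  show ?thesis
  proof
    show "finite \<Omega>" by (rule finite_\<Omega>)
    show "disjoint_family_on (\<lambda>i. \<tau> ` B i) {..<d}"
      using disjoint_blocks permutes_inj[OF \<tau>]
      by (simp add: disjoint_family_on_def image_Int[symmetric])
    show "(\<Union>i<d. \<tau> ` B i) = \<Omega>"
      using UN_blocks permutes_image[OF \<tau>] by (simp flip: image_UN)
  qed
qed

lemma sum_list_take_mono:
  "m \<le> n \<Longrightarrow> sum_list (take m (xs::nat list)) \<le> sum_list (take n xs)"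
  by (metis le_add_diff_inverse take_add sum_list_append le_add1)

lemma block_partition_block: "block_partition {1..sum_list ns} (length ns) (block ns)"
proof
  show "finite {1..sum_list ns}" by simp
  have disjoint_if_less: "block ns i \<inter> block ns j = {}" if "i < j" "j < length ns" for i j
  proof -
    have "sum_list (take i ns) + ns ! i = sum_list (take (Suc i) ns)"
      using that by (simp add: take_Suc_conv_app_nth)
    also have "\<dots> \<le> sum_list (take j ns)"
      using that by (intro sum_list_take_mono) simp
    finally show ?thesis
      by (auto simp: block_def)
  qed
  show "disjoint_family_on (block ns) {..<length ns}"
    unfolding disjoint_family_on_def
  proof (intro ballI impI)
    fix i j assume "i \<in> {..<length ns}" "j \<in> {..<length ns}" "i \<noteq> j"
    then show "block ns i \<inter> block ns j = {}"
      using disjoint_if_less[of i j] disjoint_if_less[of j i]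
      by (cases "i < j") (auto simp: Int_commute)
  qed
  show "(\<Union>i<length ns. block ns i) = {1..sum_list ns}"
  proof (induction ns rule: rev_induct)
    case (snoc x xs)
    have "(\<Union>i<length (xs @ [x]). block (xs @ [x]) i)
        = (\<Union>i<length xs. block xs i) \<union> {sum_list xs + 1 .. sum_list xs + x}"
      by (simp add: lessThan_Suc block_def nth_append Un_commute)
    then show ?case
      using snoc by auto
  qed simp
qed

lemma T7_eq_extensions: "T7 = extensions {1..11} {0} 6"
proof (rule set_eqI)
  fix s :: "nat set"
  have "{0..<12::nat} = insert 0 {1..11}" and "0 \<notin> {1..11::nat}"
    by auto
  then have T7_iff: "s \<in> T7 \<longleftrightarrow> s - {1..11} = {0} \<and> card s = 7"
    unfolding T7_def mem_Collect_eq by blast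
  show "s \<in> T7 \<longleftrightarrow> s \<in> extensions {1..11} {0} 6"
  proof (cases "s - {1..11} = {0}")
    case True
    then have "card s = card (insert 0 (s \<inter> {1..11}))"
      by (intro arg_cong[where f = card]) blast
    then show ?thesis
      using True by (simp add: T7_iff extensions_def)
  next
    case False
    then show ?thesis
      by (simp add: T7_iff extensions_def)
  qed
qed

theorem proposition5p1:
  fixes ns :: "nat list" and G :: "(nat \<Rightarrow> nat) set"
  assumes "ns \<noteq> []" and "\<forall>n \<in> set ns. n > 0" and "sum_list ns = 11"
    and "max_tt_group ns G"
  shows "(image_mset card (mset_set (orbits set_act G T7))
           = image_mset (binprod ns) (mset_set (tuples ns)))
     \<and> (\<forall>t::real. t \<noteq> 0 \<longrightarrow> orb_t set_act G T7 t
           = ((1 / 462) * (\<Sum>ks\<in>tuples ns. real (binprod ns ks) powr (t + 1))) powr (1 / t))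
     \<and> (orb_inf set_act G T7 = Max (binprod ns ` tuples ns))
     \<and> (\<forall>t::real. t \<noteq> 0 \<longrightarrow> diam_t set_act G T7 t
           = real (Max (binprod ns ` tuples ns))
             / ((1 / 462) * (\<Sum>ks\<in>tuples ns. real (binprod ns ks) powr (t + 1))) powr (1 / t))
     \<and> (card T7 = 462)
     \<and> ((462::nat) = 11 choose 6)
     \<and> ((462::nat) = (\<Sum>ks\<in>tuples ns. binprod ns ks))
     \<and> (card (orbits set_act G T7) = card (tuples ns))"
proof -
  define \<Omega> where "\<Omega> = {1..11::nat}"
  obtain \<tau> where \<tau>: "\<tau> permutes \<Omega>" and G: "G = conj_grp \<tau> (young ns)"
    using assms(4) by (auto simp: max_tt_group_def S11_def \<Omega>_def)
  interpret block_partition \<Omega> "length ns" "\<lambda>i. \<tau> ` block ns i"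
    using block_partition_permutes_image[OF block_partition_block[of ns, unfolded assms(3)] \<tau>[unfolded \<Omega>_def]]
    by (simp add: \<Omega>_def)
  have G_eq: "G = block_stabilizer"
    unfolding block_stabilizer_def G young_def S11_def \<Omega>_def[symmetric]
    using conj_grp_set_stabilizer[OF \<tau>, of "length ns" "block ns"] by simp
  have set_act_eq: "set_act = image"
    by (simp add: fun_eq_iff set_act_def)
  have T7_eq: "T7 = extensions \<Omega> {0} 6"
    unfolding \<Omega>_def by (rule T7_eq_extensions)
  have "card (\<tau> ` block ns i) = ns ! i" for i
    using permutes_inj[OF \<tau>] by (simp add: card_image inj_on_subset block_def)
  then have tuples_eq: "tuples ns = admissible_profiles 6" and binprod_eq: "binprod ns = class_size"
    by (simp_all add: tuples_def admissible_profiles_def binprod_def class_size_def fun_eq_iff)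
  have disj: "{0} \<inter> \<Omega> = {}"
    by (simp add: \<Omega>_def)
  have binom: "(11::nat) choose 6 = 462"
    by (simp add: numeral_eq_Suc)
  have card_T7: "card (extensions \<Omega> {0} 6) = 462"
    using disj by (simp add: card_extensions finite_\<Omega> binom \<Omega>_def)
  show ?thesis
    unfolding G_eq set_act_eq T7_eq tuples_eq binprod_eq
    using disj binom card_T7 card_T7[unfolded card_extensions_eq_sum_class_size[OF disj]]
    by (simp add: mset_orbit_sizes_extensions orb_t_extensions orb_inf_extensions
        card_orbits_extensions diam_t_def)
qed

end
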